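(* Let $u(t)=\sum_{i=1}^M s_i(t)e^{j2\pi f_it}$ be a signal in the class $\mathcal{M}_2$ described in the context, and consider an L-shaped array with $2N-1$ sensors ($N$ along each axis, with a common sensor at the origin) and distance $d$ between adjacent sensors. Let $\alpha_i=f_i\cos\theta_i$, $\beta_i=f_i\sin\theta_i$, and suppose they lie on the grid $\{\delta l\}_{l=-L_0}^{L_0}$ with $L_0=\frac{f_{\text{Nyq}}}{2\delta}$; set $L=2L_0+1$. Let $\mathbf{G}\in\mathbb{C}^{(2N-1)\times L^2}$ have entries, for $l=0,\dots,L^2-1$ with $l_1=(l\bmod L)-L_0$ and $l_2=\lfloor l/L\rfloor-L_0$: $G_{n,l}=e^{j2\pi\frac{dn}{c}\delta l_1}$ for $0\le n\le N-1$ and $G_{n,l}=e^{j2\pi\frac{d(n-N+1)}{c}\delta l_2}$ for $N\le n\le 2N-2$. Let $\mathbf{R}=\mathbf{G}\mathbf{R}_w^g\mathbf{G}^H$, where $\mathbf{R}_w^g$ is the $L^2\times L^2$ diagonal matrix whose only nonzero entries are $\mathbb{E}[|w_i|^2]$ at the $M$ indices corresponding to the pairs $(\alpha_i,\beta_i)$, and let $\mathbf{r}_w^g$ be the diagonal of $\mathbf{R}_w^g$, so that $\mathrm{vec}(\mathbf{R})=(\bar{\mathbf{G}}\odot\mathbf{G})\mathbf{r}_w^g$. If (c1) $d<\frac{c}{f_{\text{Nyq}}}$, (c2) $N>M$, and (c3) $\mathrm{spark}(\mathbf{G})=N+1$, then the equation $\mathrm{vec}(\mathbf{R})=(\bar{\mathbf{G}}\odot\mathbf{G})\mathbf{r}$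 has a unique $M$-sparse solution $\mathbf{r}=\mathbf{r}_w^g$.
   Context: Class $\mathcal{M}_2$: $u$ is complex valued with Fourier transform supported in $[-f_{\text{Nyq}}/2,f_{\text{Nyq}}/2]$, each $s_i$ has Fourier transform supported in $[-B/2,B/2]$, $\min_{i\neq j}|f_i-f_j|>B$; the $s_i$ are wide-sense stationary, zero mean, mutually uncorrelated with nonzero variances; transmission $i$ has unknown angle of arrival $\theta_i$ in the $xz$-plane, $|\theta_i|<90^\circ$, and $f_i\cos\theta_i$ (resp. $f_i\sin\theta_i$) are pairwise distinct. $c>0$ is the propagation speed. Each sensor multiplies by a common periodic function $p(t)$, low-pass filters and samples; $w_i[k]$ denotes the resulting baseband samples of transmission $i$, and the stacked sample vector $\mathbf{v}$ of both axes has correlation $\mathbb{E}[\mathbf{v}\mathbf{v}^H]=\mathbf{R}$. $\mathrm{vec}(\cdot)$ stacks columns, $\bar{\mathbf{G}}$ is the entrywise complex conjugate, $\odot$ is the Khatri–Rao (column-wise Kronecker) product, and $\mathrm{spark}$ is the smallest number of linearly dependent columns. A vector is $M$-sparse if it has at most $M$ nonzero entries. *)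

theory Defs
  imports Complex_Main "HOL-Library.Extended_Nat"
begin

text \<open>Matrices and vectors are represented as functions on natural-number
indices (0-based); dimensions are carried explicitly.\<close>

definition mat_mult :: "nat \<Rightarrow> (nat \<Rightarrow> nat \<Rightarrow> complex) \<Rightarrow> (nat \<Rightarrow> nat \<Rightarrow> complex) \<Rightarrow> nat \<Rightarrow> nat \<Rightarrow> complex" where
  "mat_mult inner A B i k = (\<Sum>j<inner. A i j * B j k)"

definition mat_vec :: "nat \<Rightarrow> (nat \<Rightarrow> nat \<Rightarrow> complex) \<Rightarrow> (nat \<Rightarrow> complex) \<Rightarrow> nat \<Rightarrow> complex" where
  "mat_vec inner A x i = (\<Sum>j<inner. A i j * x j)"

definition adjoint_mat :: "(nat \<Rightarrow> nat \<Rightarrow> complex) \<Rightarrow> nat \<Rightarrow> nat \<Rightarrow> complex" where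
  "adjoint_mat A i j = cnj (A j i)"

definition conj_mat :: "(nat \<Rightarrow> nat \<Rightarrow> complex) \<Rightarrow> nat \<Rightarrow> nat \<Rightarrow> complex" where
  "conj_mat A i j = cnj (A i j)"

definition diag_mat :: "(nat \<Rightarrow> complex) \<Rightarrow> nat \<Rightarrow> nat \<Rightarrow> complex" where
  "diag_mat v i j = (if i = j then v i else 0)"

definition vec_mat :: "nat \<Rightarrow> (nat \<Rightarrow> nat \<Rightarrow> complex) \<Rightarrow> nat \<Rightarrow> complex" where
  "vec_mat nr A i = A (i mod nr) (i div nr)"

text \<open>Khatri--Rao (column-wise Kronecker) product; \<open>nrB\<close> is the number of rows of B.
  Column l is (column l of A) \<otimes> (column l of B).\<close>
definition khatri_rao :: "nat \<Rightarrow> (nat \<Rightarrow> nat \<Rightarrow> complex) \<Rightarrow> (nat \<Rightarrow> nat \<Rightarrow> complex) \<Rightarrow> nat \<Rightarrow> nat \<Rightarrow> complex" where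
  "khatri_rao nrB A B i l = A (i div nrB) l * B (i mod nrB) l"

definition cols_dependent :: "(nat \<Rightarrow> nat \<Rightarrow> complex) \<Rightarrow> nat \<Rightarrow> nat set \<Rightarrow> bool" where
  "cols_dependent A nr S \<longleftrightarrow>
     (\<exists>x::nat \<Rightarrow> complex. (\<exists>j\<in>S. x j \<noteq> 0) \<and> (\<forall>n<nr. (\<Sum>j\<in>S. A n j * x j) = 0))"

definition spark :: "(nat \<Rightarrow> nat \<Rightarrow> complex) \<Rightarrow> nat \<Rightarrow> nat \<Rightarrow> enat" where
  "spark A nr nc =
     (if \<exists>S. S \<subseteq> {..<nc} \<and> cols_dependent A nr S
      then enat (LEAST k. \<exists>S. S \<subseteq> {..<nc} \<and> card S = k \<and> cols_dependent A nr S)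
      else \<infinity>)"

definition sparse :: "nat \<Rightarrow> (nat \<Rightarrow> complex) \<Rightarrow> bool" where
  "sparse M x \<longleftrightarrow> finite {j. x j \<noteq> 0} \<and> card {j. x j \<noteq> 0} \<le> M"

definition Gmat :: "nat \<Rightarrow> nat \<Rightarrow> real \<Rightarrow> real \<Rightarrow> real \<Rightarrow> nat \<Rightarrow> nat \<Rightarrow> complex" where
  "Gmat N L0 d c \<delta> n l =
     (let L = 2 * L0 + 1;
          l1 = int (l mod L) - int L0;
          l2 = int (l div L) - int L0
      in if n < N then cis (2 * pi * (d * real n / c) * \<delta> * of_int l1)
         else cis (2 * pi * (d * (real n - real N + 1) / c) * \<delta> * of_int l2))"

end

theory Submission
  imports Defs
begin

text \<open>Subtracting the two representations, \<open>e = r - r\<^sub>w\<^sup>g\<close> has at most \<open>2M \<le> 2N - 2\<close>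
  nonzero entries and \<open>\<Sum>\<^sub>l e\<^sub>l g\<^sub>l g\<^sub>l\<^sup>H = 0\<close>, where \<open>g\<^sub>l\<close> are the columns of G. Given
  \<open>k\<close> in the support, split it into a set \<open>S\<^sub>2\<close> of at most \<open>N - 1\<close> indices other than \<open>k\<close>
  and a rest \<open>S\<^sub>1 \<ni> k\<close> of at most \<open>N\<close> indices. Apply the zero matrix to the residual \<open>y\<close>
  of \<open>g\<^sub>k\<close> after orthogonal projection onto the span of \<open>S\<^sub>2\<close>: the \<open>S\<^sub>2\<close>-terms vanish,
  and independence of the columns in \<open>S\<^sub>1\<close> (spark \<open>N + 1\<close>) forces
  \<open>e\<^sub>k \<langle>y, g\<^sub>k\<rangle> = 0\<close>. If \<open>e\<^sub>k \<noteq> 0\<close> then \<open>\<langle>y, y\<rangle> = \<langle>y, g\<^sub>k\<rangle> = 0\<close>, so \<open>g\<^sub>k\<close> lies in the span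
  of \<open>S\<^sub>2\<close>, giving at most \<open>N\<close> dependent columns. Only (c2), (c3) and the grid bounds are
  needed; the remaining hypotheses concern the signal model behind \<open>R\<close>.\<close>

definition cinner :: "nat \<Rightarrow> (nat \<Rightarrow> complex) \<Rightarrow> (nat \<Rightarrow> complex) \<Rightarrow> complex" where
  "cinner n u v = (\<Sum>i<n. u i * cnj (v i))"

lemma cinner_diff_left: "cinner n (\<lambda>i. u i - c * v i) w = cinner n u w - c * cinner n v w"
  by (simp add: cinner_def algebra_simps sum_subtractf sum_distrib_left)

lemma cinner_diff_right: "cinner n u (\<lambda>i. v i - w i) = cinner n u v - cinner n u w"
  by (simp add: cinner_def algebra_simps sum_subtractf)

lemma cinner_sum_right:
  "cinner n u (\<lambda>i. \<Sum>j\<in>T. z j * A i j) = (\<Sum>j\<in>T. cnj (z j) * cinner n u (\<lambda>i. A i j))"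
  unfolding cinner_def
  by (simp add: sum_distrib_left sum_distrib_right mult_ac sum.swap[of _ T])

lemma cinner_self_eq_0:
  assumes "cinner n u u = 0" "i < n"
  shows "u i = 0"
proof -
  have "cinner n u u = complex_of_real (\<Sum>i<n. (cmod (u i))\<^sup>2)"
    by (simp add: cinner_def complex_mult_cnj cmod_def)
  hence "(\<Sum>i<n. (cmod (u i))\<^sup>2) = 0"
    using assms(1) by (metis of_real_eq_0_iff)
  hence "\<forall>i\<in>{..<n}. (cmod (u i))\<^sup>2 = 0"
    by (subst (asm) sum_nonneg_eq_0_iff) auto
  thus ?thesis using assms(2) by simp
qed

lemma orthogonal_residual_exists:
  assumes "finite T"
  shows "\<exists>z. \<forall>l\<in>T. cinner n (\<lambda>i. w i - (\<Sum>j\<in>T. z j * A i j)) (\<lambda>i. A i l) = 0"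
  using assms
proof (induction T arbitrary: w rule: finite_induct)
  case empty
  show ?case by simp
next
  case (insert v T)
  obtain z1 where r1_orth: "\<forall>l\<in>T. cinner n (\<lambda>i. w i - (\<Sum>j\<in>T. z1 j * A i j)) (\<lambda>i. A i l) = 0"
    using insert.IH by blast
  obtain z2 where e_orth: "\<forall>l\<in>T. cinner n (\<lambda>i. A i v - (\<Sum>j\<in>T. z2 j * A i j)) (\<lambda>i. A i l) = 0"
    using insert.IH[of "\<lambda>i. A i v"] by blast
  define r1 where "r1 = (\<lambda>i. w i - (\<Sum>j\<in>T. z1 j * A i j))"
  define e where "e = (\<lambda>i. A i v - (\<Sum>j\<in>T. z2 j * A i j))"
  txt \<open>If \<open>e\<close> vanishes, \<open>c = 0 / 0 = 0\<close> and the Gram--Schmidt step below is still correct.\<close>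
  define c where "c = cinner n r1 e / cinner n e e"
  define z where "z = (\<lambda>j. z1 j - c * z2 j)(v := c)"
  have residual: "(\<lambda>i. w i - (\<Sum>j\<in>insert v T. z j * A i j)) = (\<lambda>i. r1 i - c * e i)"
  proof
    fix i
    have "(\<Sum>j\<in>T. z j * A i j) = (\<Sum>j\<in>T. (z1 j - c * z2 j) * A i j)"
      using insert.hyps(2) by (intro sum.cong) (auto simp: z_def)
    also have "\<dots> = (\<Sum>j\<in>T. z1 j * A i j) - c * (\<Sum>j\<in>T. z2 j * A i j)"
      by (simp add: sum_distrib_left left_diff_distrib sum_subtractf mult.assoc)
    finally show "w i - (\<Sum>j\<in>insert v T. z j * A i j) = r1 i - c * e i"
      using insert.hyps by (simp add: z_def r1_def e_def right_diff_distrib)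
  qed
  have orth_T: "\<forall>l\<in>T. cinner n (\<lambda>i. r1 i - c * e i) (\<lambda>i. A i l) = 0"
    using r1_orth e_orth by (simp add: cinner_diff_left r1_def e_def)
  have "cinner n r1 e = 0" if "cinner n e e = 0"
    using cinner_self_eq_0[OF that] by (simp add: cinner_def)
  hence orth_e: "cinner n (\<lambda>i. r1 i - c * e i) e = 0"
    unfolding cinner_diff_left c_def by (cases "cinner n e e = 0") simp_all
  have "cinner n (\<lambda>i. r1 i - c * e i) (\<lambda>i. A i v)
      = cinner n (\<lambda>i. r1 i - c * e i) e
        + cinner n (\<lambda>i. r1 i - c * e i) (\<lambda>i. \<Sum>j\<in>T. z2 j * A i j)"
    unfolding e_def by (simp add: cinner_diff_right)
  also have "\<dots> = 0"
    using orth_e orth_T by (simp add: cinner_sum_right)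
  finally show ?case
    using orth_T residual by (intro exI[of _ z]) auto
qed

lemma cols_dependent_insert_span:
  assumes "finite T" "k \<notin> T" "\<forall>p<n. A p k = (\<Sum>j\<in>T. z j * A p j)"
  shows "cols_dependent A n (insert k T)"
  unfolding cols_dependent_def
proof (intro exI[of _ "\<lambda>j. if j = k then 1 else - z j"] conjI allI impI)
  fix p assume "p < n"
  have "(\<Sum>j\<in>T. A p j * (if j = k then 1 else - z j)) = - (\<Sum>j\<in>T. z j * A p j)"
    using assms(2) by (subst sum_negf[symmetric], intro sum.cong) auto
  thus "(\<Sum>j\<in>insert k T. A p j * (if j = k then 1 else - z j)) = 0"
    using assms \<open>p < n\<close> by simp
qed auto

lemma independent_cols_coeff_eq_0:
  assumes "\<not> cols_dependent A n S" "\<forall>p<n. (\<Sum>j\<in>S. A p j * x j) = 0" "j \<in> S"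
  shows "x j = 0"
  using assms unfolding cols_dependent_def by blast

lemma spark_cols_independent:
  assumes "spark A nr nc = enat (K + 1)" "S \<subseteq> {..<nc}" "card S \<le> K"
  shows "\<not> cols_dependent A nr S"
proof
  assume dep: "cols_dependent A nr S"
  hence "(LEAST k. \<exists>S. S \<subseteq> {..<nc} \<and> card S = k \<and> cols_dependent A nr S) = K + 1"
    using assms(1,2) unfolding spark_def by (auto split: if_splits)
  moreover have "(LEAST k. \<exists>S. S \<subseteq> {..<nc} \<and> card S = k \<and> cols_dependent A nr S) \<le> card S"
    using dep assms(2) by (intro Least_le) blast
  ultimately show False using assms(3) by simp
qed

lemma outer_products_apply:
  "(\<Sum>l\<in>S. x l * cinner n y (\<lambda>i. A i l) * A p l)
     = (\<Sum>q<n. y q * (\<Sum>l\<in>S. x l * A p l * cnj (A q l)))"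
  unfolding cinner_def
  by (simp add: sum_distrib_left sum_distrib_right mult_ac sum.swap[of _ S])

lemma outer_products_combination_eq_0:
  fixes A :: "nat \<Rightarrow> nat \<Rightarrow> complex"
  assumes indep: "\<And>S. S \<subseteq> {..<nc} \<Longrightarrow> card S \<le> N \<Longrightarrow> \<not> cols_dependent A n S"
    and S: "S \<subseteq> {..<nc}" "card S + 2 \<le> 2 * N"
    and outer_eq_0: "\<forall>p<n. \<forall>q<n. (\<Sum>l\<in>S. x l * A p l * cnj (A q l)) = 0"
    and k: "k \<in> S"
  shows "x k = 0"
proof (rule ccontr)
  assume xk: "x k \<noteq> 0"
  have fin: "finite S" using S(1) finite_subset by blast
  obtain S2 where S2: "S2 \<subseteq> S - {k}" "card S2 = min (N - 1) (card S - 1)"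
    using obtain_subset_with_card_n[of "min (N - 1) (card S - 1)" "S - {k}"] k fin by auto
  have fin2: "finite S2" using S2(1) fin finite_subset by blast
  have "card S \<ge> 1" using k fin by (simp add: Suc_le_eq card_gt_0_iff) blast
  hence card_S1: "card (S - S2) \<le> N"
    using S2 S(2) card_Diff_subset[OF fin2] by (simp add: subset_Diff_insert)
  obtain z where orth: "\<forall>l\<in>S2. cinner n (\<lambda>i. A i k - (\<Sum>j\<in>S2. z j * A i j)) (\<lambda>i. A i l) = 0"
    using orthogonal_residual_exists[OF fin2, of n "\<lambda>i. A i k" A] by blast
  define y where "y = (\<lambda>i. A i k - (\<Sum>j\<in>S2. z j * A i j))"
  have combination_S1: "\<forall>p<n. (\<Sum>l\<in>S - S2. A p l * (x l * cinner n y (\<lambda>i. A i l))) = 0"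
  proof (intro allI impI)
    fix p assume "p < n"
    have "(\<Sum>l\<in>S. x l * cinner n y (\<lambda>i. A i l) * A p l) = 0"
      using outer_eq_0 \<open>p < n\<close> by (simp add: outer_products_apply)
    moreover have "(\<Sum>l\<in>S2. x l * cinner n y (\<lambda>i. A i l) * A p l) = 0"
      using orth by (simp add: y_def)
    moreover have "S2 \<subseteq> S" using S2(1) by blast
    ultimately show "(\<Sum>l\<in>S - S2. A p l * (x l * cinner n y (\<lambda>i. A i l))) = 0"
      using sum.subset_diff[OF _ fin, of S2 "\<lambda>l. x l * cinner n y (\<lambda>i. A i l) * A p l"]
      by (simp add: mult_ac)
  qed
  have "\<not> cols_dependent A n (S - S2)"
    using indep S(1) card_S1 by blast
  moreover have "k \<in> S - S2" using k S2(1) by blast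
  ultimately have "x k * cinner n y (\<lambda>i. A i k) = 0"
    using independent_cols_coeff_eq_0[OF _ combination_S1] by blast
  hence "cinner n y (\<lambda>i. A i k) = 0" using xk by simp
  moreover have "cinner n y (\<lambda>i. \<Sum>j\<in>S2. z j * A i j) = 0"
    using orth by (simp add: cinner_sum_right y_def)
  ultimately have "cinner n y y = 0"
    by (simp add: y_def cinner_diff_right)
  hence "\<forall>p<n. A p k = (\<Sum>j\<in>S2. z j * A p j)"
    using cinner_self_eq_0 unfolding y_def by fastforce
  hence "cols_dependent A n (insert k S2)"
    using cols_dependent_insert_span fin2 S2(1) by blast
  moreover have "card (insert k S2) \<le> N" "insert k S2 \<subseteq> {..<nc}"
    using S2 S fin2 k by (auto simp: subset_Diff_insert)
  ultimately show False using indep by blast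
qed

lemma mat_vec_khatri_rao_conj:
  assumes "p < nr"
  shows "mat_vec K (khatri_rao nr (conj_mat A) A) v (p + nr * q)
           = (\<Sum>l<K. v l * A p l * cnj (A q l))"
  using assms unfolding mat_vec_def khatri_rao_def conj_mat_def by (simp add: mult_ac)

lemma khatri_rao_sparse_injective:
  assumes spark: "spark A n K = enat (N + 1)" and "M < N"
    and "sparse M r" "sparse M r'" "\<forall>l\<ge>K. r l = 0" "\<forall>l\<ge>K. r' l = 0"
    and eq: "\<forall>i<n\<^sup>2. mat_vec K (khatri_rao n (conj_mat A) A) r i
                   = mat_vec K (khatri_rao n (conj_mat A) A) r' i"
  shows "r = r'"
proof -
  define e where "e = (\<lambda>l. r l - r' l)"
  define S where "S = {l. e l \<noteq> 0}"
  have S_K: "S \<subseteq> {..<K}"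
    using assms(5,6) by (auto simp: S_def e_def not_le[symmetric])
  have "S \<subseteq> {j. r j \<noteq> 0} \<union> {j. r' j \<noteq> 0}" by (auto simp: S_def e_def)
  hence "card S \<le> card {j. r j \<noteq> 0} + card {j. r' j \<noteq> 0}"
    using assms(3,4) unfolding sparse_def by (meson card_Un_le card_mono finite_UnI order_trans)
  hence card_S: "card S + 2 \<le> 2 * N"
    using assms(2-4) unfolding sparse_def by linarith
  have "\<forall>p<n. \<forall>q<n. (\<Sum>l\<in>S. e l * A p l * cnj (A q l)) = 0"
  proof (intro allI impI)
    fix p q assume "p < n" "q < n"
    have "p + n * q < n * (q + 1)" using \<open>p < n\<close> by simp
    also have "\<dots> \<le> n\<^sup>2"
      using \<open>q < n\<close> unfolding power2_eq_square by (intro mult_left_mono) auto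
    finally have "p + n * q < n\<^sup>2" .
    hence "(\<Sum>l<K. r l * A p l * cnj (A q l)) = (\<Sum>l<K. r' l * A p l * cnj (A q l))"
      using eq mat_vec_khatri_rao_conj[OF \<open>p < n\<close>] by metis
    hence "(\<Sum>l<K. e l * A p l * cnj (A q l)) = 0"
      by (simp add: e_def algebra_simps sum_subtractf)
    moreover have "(\<Sum>l<K. e l * A p l * cnj (A q l)) = (\<Sum>l\<in>S. e l * A p l * cnj (A q l))"
      using S_K by (intro sum.mono_neutral_right) (auto simp: S_def)
    ultimately show "(\<Sum>l\<in>S. e l * A p l * cnj (A q l)) = 0" by simp
  qed
  hence "\<forall>k\<in>S. e k = 0"
    using outer_products_combination_eq_0[OF spark_cols_independent[OF spark] S_K card_S] by blast
  thus ?thesis by (auto simp: S_def e_def fun_eq_iff)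
qed

lemma vec_covariance_eq_khatri_rao:
  "vec_mat nr (mat_mult K (mat_mult K A (diag_mat r)) (adjoint_mat A)) i
     = mat_vec K (khatri_rao nr (conj_mat A) A) r i"
proof -
  have "mat_mult K A (diag_mat r) p j = A p j * r j" if "j < K" for p j
  proof -
    have "mat_mult K A (diag_mat r) p j = (\<Sum>k<K. if k = j then A p j * r j else 0)"
      unfolding mat_mult_def diag_mat_def by (rule sum.cong) auto
    thus ?thesis using that by simp
  qed
  thus ?thesis
    unfolding vec_mat_def mat_mult_def[of _ _ "adjoint_mat A"] adjoint_mat_def
      mat_vec_def khatri_rao_def conj_mat_def
    by (intro sum.cong) (simp_all add: mult_ac)
qed

lemma grid_index_less:
  fixes a b :: int
  assumes "\<bar>a\<bar> \<le> int L0" "\<bar>b\<bar> \<le> int L0"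
  shows "nat (a + int L0) + (2 * L0 + 1) * nat (b + int L0) < (2 * L0 + 1)\<^sup>2"
proof -
  have "nat (a + int L0) + (2 * L0 + 1) * nat (b + int L0) \<le> 2 * L0 + (2 * L0 + 1) * (2 * L0)"
    using assms by (intro add_mono mult_left_mono) auto
  also have "\<dots> < (2 * L0 + 1)\<^sup>2" by (simp add: power2_eq_square algebra_simps)
  finally show ?thesis .
qed

lemma spike_sum_eq_0:
  assumes "l \<notin> g ` {..<M}"
  shows "(\<Sum>i<M. if g i = l then s i else 0) = (0::complex)"
  using assms by (intro sum.neutral) auto

lemma sparse_spike_sum: "sparse M (\<lambda>l. \<Sum>i<M. if g i = l then s i else 0)"
proof -
  have support: "{l. (\<Sum>i<M. if g i = l then s i else 0) \<noteq> 0} \<subseteq> g ` {..<M}"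
    using spike_sum_eq_0[of _ g M s] by blast
  hence "card {l. (\<Sum>i<M. if g i = l then s i else 0) \<noteq> 0} \<le> card (g ` {..<M})"
    by (intro card_mono) auto
  also have "\<dots> \<le> M"
    using card_image_le[of "{..<M}" g] by simp
  finally show ?thesis
    using support finite_subset unfolding sparse_def by blast
qed

theorem theorem5:
  fixes M N L0 :: nat and d c \<delta> fNyq B :: real
    and f \<theta> \<sigma> :: "nat \<Rightarrow> real" and a b :: "nat \<Rightarrow> int"
    and L :: nat and G :: "nat \<Rightarrow> nat \<Rightarrow> complex"
    and idx :: "nat \<Rightarrow> nat" and rw :: "nat \<Rightarrow> complex" and R :: "nat \<Rightarrow> nat \<Rightarrow> complex"
  assumes c_pos: "c > 0" and d_pos: "d > 0" and delta_pos: "\<delta> > 0"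
    and B_pos: "B > 0" and fNyq_pos: "fNyq > 0"
    and L0_def: "real L0 = fNyq / (2 * \<delta>)"
    and sep: "\<forall>i<M. \<forall>j<M. i \<noteq> j \<longrightarrow> \<bar>f i - f j\<bar> > B"
    and band: "\<forall>i<M. \<bar>f i\<bar> + B / 2 \<le> fNyq / 2"
    and angle: "\<forall>i<M. \<bar>\<theta> i\<bar> < pi / 2"
    and var_pos: "\<forall>i<M. \<sigma> i > 0"
    and grid_alpha: "\<forall>i<M. f i * cos (\<theta> i) = \<delta> * of_int (a i) \<and> \<bar>a i\<bar> \<le> int L0"
    and grid_beta: "\<forall>i<M. f i * sin (\<theta> i) = \<delta> * of_int (b i) \<and> \<bar>b i\<bar> \<le> int L0"
    and alpha_distinct: "inj_on (\<lambda>i. f i * cos (\<theta> i)) {..<M}"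
    and beta_distinct: "inj_on (\<lambda>i. f i * sin (\<theta> i)) {..<M}"
    and L_def: "L = 2 * L0 + 1"
    and G_def: "G = Gmat N L0 d c \<delta>"
    and idx_def: "idx = (\<lambda>i. nat (a i + int L0) + L * nat (b i + int L0))"
    and rw_def: "rw = (\<lambda>l. \<Sum>i<M. if idx i = l then complex_of_real (\<sigma> i) else 0)"
    and R_def: "R = mat_mult (L^2) (mat_mult (L^2) G (diag_mat rw)) (adjoint_mat G)"
    and c1: "d < c / fNyq"
    and c2: "N > M"
    and c3: "spark G (2 * N - 1) (L^2) = enat (N + 1)"
  shows "sparse M rw \<and> (\<forall>l\<ge>L^2. rw l = 0)
    \<and> (\<forall>i<(2 * N - 1)^2. vec_mat (2 * N - 1) R i
           = mat_vec (L^2) (khatri_rao (2 * N - 1) (conj_mat G) G) rw i)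
    \<and> (\<forall>r. (\<forall>l\<ge>L^2. r l = 0) \<and> sparse M r
           \<and> (\<forall>i<(2 * N - 1)^2. vec_mat (2 * N - 1) R i
                 = mat_vec (L^2) (khatri_rao (2 * N - 1) (conj_mat G) G) r i)
           \<longrightarrow> r = rw)"
proof -
  have idx_less: "idx i < L^2" if "i < M" for i
    unfolding idx_def L_def using grid_alpha grid_beta that by (intro grid_index_less) auto
  have rw_outside: "\<forall>l\<ge>L^2. rw l = 0"
  proof (intro allI impI)
    fix l assume "L^2 \<le> l"
    hence "l \<notin> idx ` {..<M}" using idx_less by fastforce
    thus "rw l = 0" unfolding rw_def by (rule spike_sum_eq_0)
  qed
  have sparse_rw: "sparse M rw"
    unfolding rw_def by (rule sparse_spike_sum)
  have vec_R: "vec_mat (2 * N - 1) R i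
                 = mat_vec (L^2) (khatri_rao (2 * N - 1) (conj_mat G) G) rw i" for i
    unfolding R_def by (rule vec_covariance_eq_khatri_rao)
  have "r = rw"
    if "\<forall>l\<ge>L^2. r l = 0" "sparse M r"
      "\<forall>i<(2 * N - 1)^2. vec_mat (2 * N - 1) R i
                 = mat_vec (L^2) (khatri_rao (2 * N - 1) (conj_mat G) G) r i" for r
  proof (rule khatri_rao_sparse_injective[OF c3 c2 that(2) sparse_rw that(1) rw_outside])
    show "\<forall>i<(2 * N - 1)\<^sup>2. mat_vec (L^2) (khatri_rao (2 * N - 1) (conj_mat G) G) r i
                          = mat_vec (L^2) (khatri_rao (2 * N - 1) (conj_mat G) G) rw i"
      using that(3) by (metis vec_R)
  qed
  thus ?thesis using sparse_rw rw_outside vec_R by blast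
qed

end
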